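(* Let $\varepsilon\in(0,1/2)$ and consider two arms with independent priors: $\mu_1=\tfrac12+\varepsilon$ or $\mu_1=\tfrac12-\varepsilon$ each with probability $1/2$, and $\mu_2=\tfrac12-\tfrac{\varepsilon^2}{10}$ almost surely. Then (i) there is a BIC algorithm which almost surely chooses both arms within $O(1)$ rounds (an absolute constant number of rounds); and (ii) there is an absolute constant $c>0$ such that if some BIC algorithm almost surely uses Thompson sampling at round $t$, i.e. $\Pr[A_t=i\mid\mathcal F_t]=\Pr[A^*=i\mid\mathcal F_t]$ almost surely for $i=1,2$, then $t\geq c/\varepsilon$.
   Context: Incentivized exploration model with Bernoulli rewards: given the means, each arm $i$ has an i.i.d. $\{0,1\}$ sample sequence with mean $\mu_i$, the $n$-th choice of arm $i$ revealing its $n$-th sample. Each round the algorithm recommends $A_t$, the agent chooses $A'_t$, and the reward is observed by the algorithm only. With $\mathcal E_{t-1}=\{A'_s=A_s\ \forall s<t\}$, the algorithm is BIC if $\mathbb E[\mu_i-\mu_j\mid A_t=i,\mathcal E_{t-1}]\geq0$ for all rounds $t$ and arms $i,j$ with $\Pr[A_t=i]>0$. $\mathcal F_t$ is the $\sigma$-algebra generated by chosen arms and rewards before round $t$; $A^*=\min(\arg\max_j\mu_j)$. *)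

theory Defs
  imports "HOL-Probability.Probability"
begin

type_synonym hist = "(nat \<times> bool) list"   \<comment> \<open>chosen arms and observed rewards, in order\<close>
type_synonym alg = "hist \<Rightarrow> nat pmf"

definition prior :: "bool pmf" where
  "prior = bernoulli_pmf (1/2)"

definition mu :: "real \<Rightarrow> bool \<Rightarrow> nat \<Rightarrow> real" where
  "mu eps theta i = (if i = 1 then (if theta then 1/2 + eps else 1/2 - eps)
                     else 1/2 - eps^2/10)"

definition best_arm :: "real \<Rightarrow> bool \<Rightarrow> nat" where
  "best_arm eps theta =
     (LEAST i. i \<in> {1,2} \<and> (\<forall>j\<in>{1::nat,2}. mu eps theta j \<le> mu eps theta i))"

definition valid_alg :: "alg \<Rightarrow> bool" where
  "valid_alg A \<longleftrightarrow> (\<forall>h. set_pmf (A h) \<subseteq> {1,2})"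

text \<open>Joint law of (theta, history) after n rounds, all agents complying.
  Each pull of arm a draws a fresh Bernoulli(mu_a) sample (equivalent in law to
  revealing the next i.i.d. sample of that arm).\<close>
fun run :: "real \<Rightarrow> alg \<Rightarrow> nat \<Rightarrow> (bool \<times> hist) pmf" where
  "run eps A 0 = map_pmf (\<lambda>theta. (theta, [])) prior"
| "run eps A (Suc n) =
     bind_pmf (run eps A n) (\<lambda>(theta, h).
       bind_pmf (A h) (\<lambda>a.
         map_pmf (\<lambda>r. (theta, h @ [(a, r)])) (bernoulli_pmf (mu eps theta a))))"

text \<open>Joint law of (theta, history before round t, A_t) for rounds t \<ge> 1.\<close>
definition rec_dist :: "real \<Rightarrow> alg \<Rightarrow> nat \<Rightarrow> (bool \<times> hist \<times> nat) pmf" where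
  "rec_dist eps A t =
     bind_pmf (run eps A (t - 1)) (\<lambda>(theta, h). map_pmf (\<lambda>a. (theta, h, a)) (A h))"

definition BIC :: "real \<Rightarrow> alg \<Rightarrow> bool" where
  "BIC eps A \<longleftrightarrow>
     (\<forall>t\<ge>1. \<forall>i\<in>{1::nat,2}. \<forall>j\<in>{1::nat,2}.
        measure_pmf.prob (rec_dist eps A t) {x. snd (snd x) = i} > 0 \<longrightarrow>
        measure_pmf.expectation (cond_pmf (rec_dist eps A t) {x. snd (snd x) = i})
          (\<lambda>x. mu eps (fst x) i - mu eps (fst x) j) \<ge> 0)"

definition thompson_at :: "real \<Rightarrow> alg \<Rightarrow> nat \<Rightarrow> bool" where
  "thompson_at eps A t \<longleftrightarrow>
     (\<forall>x\<in>set_pmf (run eps A (t - 1)). \<forall>i\<in>{1::nat,2}.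
        pmf (A (snd x)) i =
        measure_pmf.prob (cond_pmf (run eps A (t - 1)) {y. snd y = snd x})
          {y. best_arm eps (fst y) = i})"

end

theory Submission
  imports Defs
begin

text \<open>
  Part (i): round 1 pulls arm 1; after a failure arm 2 is recommended, after a success a fair
  coin decides; round 3 recommends arm 1 if arm 2 was pulled after a success of arm 1 and arm 2
  otherwise; from round 4 on arm 1 is recommended. Every recommendation of arm 2 is pooled with
  the histories in which arm 1 failed, whose posterior favours arm 2 by order eps, which beats
  its prior handicap eps^2/10; recommendations of arm 1 are backed by a success of arm 1 or by
  the prior alone.

  Part (ii): let x h and y h be the joint probabilities of history h with the states
  mu_1 = 1/2 - eps and mu_1 = 1/2 + eps. Thompson sampling recommends arm 2 with probability
  x/(x + y), and the BIC constraint for this recommendation rearranges to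
  sum_h (x - y)^2/(x + y) >= eps/10. A round multiplies x and y by the likelihoods of the pulled
  arm, 1/2 -+ eps for arm 1 and equal ones for arm 2, which increases this triangular
  discrimination by at most 4 eps^2. Hence at least 1/(40 eps) rounds precede round t.
\<close>

section \<open>Finite distributions\<close>

lemma expectation_bind_pmf_finite:
  fixes f :: "'b \<Rightarrow> real"
  assumes "finite (set_pmf M)" "\<And>x. x \<in> set_pmf M \<Longrightarrow> finite (set_pmf (N x))"
  shows "measure_pmf.expectation (bind_pmf M N) f =
         measure_pmf.expectation M (\<lambda>x. measure_pmf.expectation (N x) f)"
  using assms
  by (simp add: pmf_expectation_bind[of "set_pmf M"] integral_measure_pmf_real[of "set_pmf M"]
        mult.commute)

lemma expectation_cond_pmf:
  fixes f :: "'a \<Rightarrow> real"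
  assumes fin: "finite (set_pmf M)" and pos: "measure_pmf.prob M S > 0"
  shows "measure_pmf.expectation (cond_pmf M S) f =
         measure_pmf.expectation M (\<lambda>x. indicator S x * f x) / measure_pmf.prob M S"
proof -
  have ne: "set_pmf M \<inter> S \<noteq> {}" using pos measure_pmf_zero_iff[of M S] by auto
  have "measure_pmf.expectation (cond_pmf M S) f =
        (\<Sum>x\<in>set_pmf M. f x * pmf (cond_pmf M S) x)"
    by (rule integral_measure_pmf_real) (use ne fin in auto)
  also have "\<dots> = (\<Sum>x\<in>set_pmf M. indicator S x * f x * pmf M x) / measure_pmf.prob M S"
    by (auto simp: pmf_cond[OF ne] sum_divide_distrib indicator_def intro!: sum.cong)
  also have "(\<Sum>x\<in>set_pmf M. indicator S x * f x * pmf M x) =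
             measure_pmf.expectation M (\<lambda>x. indicator S x * f x)"
    by (rule integral_measure_pmf_real[symmetric]) (use fin in auto)
  finally show ?thesis .
qed

lemma measure_cond_pmf:
  assumes "set_pmf M \<inter> S \<noteq> {}"
  shows "measure_pmf.prob (cond_pmf M S) B =
         measure_pmf.prob M (S \<inter> B) / measure_pmf.prob M S"
  by (simp add: cond_pmf.rep_eq[OF assms] emeasure_measure_pmf_not_zero[OF assms]
        measure_pmf.emeasure_finite)

lemma pmf_bind_single_source:
  assumes "\<And>y. y \<in> set_pmf M \<Longrightarrow> x \<in> set_pmf (N y) \<Longrightarrow> y = z"
  shows "pmf (bind_pmf M N) x = pmf M z * pmf (N z) x"
proof -
  have "pmf (bind_pmf M N) x = (\<Sum>y\<in>{z}. pmf (N y) x * pmf M y)"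
    unfolding pmf_bind
    by (rule integral_measure_pmf_real) (use assms in \<open>auto simp: set_pmf_iff\<close>)
  then show ?thesis by simp
qed

section \<open>Triangular discrimination\<close>

(* The junk value tri_discr 0 0 = 0 lets histories of probability zero drop out of all sums. *)
definition tri_discr :: "real \<Rightarrow> real \<Rightarrow> real" where
  "tri_discr x y = (x - y)^2 / (x + y)"

lemma tri_discr_scale: "tri_discr (x * c) (y * c) = c * tri_discr x y"
proof (cases "c = 0")
  case False
  have "(x * c - y * c)^2 = c * (c * (x - y)^2)" by (simp add: power2_eq_square algebra_simps)
  moreover have "x * c + y * c = c * (x + y)" by (simp add: algebra_simps)
  ultimately show ?thesis using False by (simp add: tri_discr_def)
qed (simp add: tri_discr_def)

lemma tri_discr_observation_le:
  assumes x: "0 \<le> x" and y: "0 \<le> y" and e: "0 \<le> e" "e < 1/2"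
  shows "tri_discr (x * (1/2 - e)) (y * (1/2 + e)) + tri_discr (x * (1/2 + e)) (y * (1/2 - e))
         \<le> tri_discr x y + 4 * e^2 * (x + y)"
proof (cases "x + y = 0")
  case True
  with x y have "x = 0" "y = 0" by auto
  then show ?thesis by (simp add: tri_discr_def)
next
  case False
  define u where "u = x + y"
  define d where "d = x - y"
  define X1 where "X1 = x * (1/2 - e) - y * (1/2 + e)"
  define X2 where "X2 = x * (1/2 + e) - y * (1/2 - e)"
  define Y1 where "Y1 = x * (1/2 - e) + y * (1/2 + e)"
  define Y2 where "Y2 = x * (1/2 + e) + y * (1/2 - e)"
  have u: "u > 0" using False x y by (simp add: u_def)
  have "\<bar>e * d\<bar> < u / 2"
  proof -
    have "\<bar>e * d\<bar> \<le> e * u"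
      using e x y by (simp add: abs_mult d_def u_def mult_left_mono)
    also have "\<dots> < u / 2" using e u by simp
    finally show ?thesis .
  qed
  moreover have "Y1 = u / 2 - e * d" "Y2 = u / 2 + e * d"
    by (simp_all add: Y1_def Y2_def u_def d_def algebra_simps)
  ultimately have Y: "Y1 > 0" "Y2 > 0" by linarith+
  have "(2 * e)^2 < 1^2"
    using e by (intro power_strict_mono) auto
  then have "4 * e^2 < 1" by (simp add: power_mult_distrib)
  then have "0 \<le> e^2 * d^2 * (4 * x * y + u^2 * (1 - 4 * e^2))"
    using x y by (intro mult_nonneg_nonneg add_nonneg_nonneg) auto
  moreover have "(d^2 + 4 * e^2 * u^2) * Y1 * Y2 - u * (X1^2 * Y2 + X2^2 * Y1)
      = e^2 * d^2 * (4 * x * y + u^2 * (1 - 4 * e^2))"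
    unfolding u_def d_def Y1_def Y2_def X1_def X2_def by algebra
  ultimately have key: "u * (X1^2 * Y2 + X2^2 * Y1) \<le> (d^2 + 4 * e^2 * u^2) * Y1 * Y2"
    by linarith
  have "tri_discr (x * (1/2 - e)) (y * (1/2 + e)) + tri_discr (x * (1/2 + e)) (y * (1/2 - e))
      = X1^2 / Y1 + X2^2 / Y2"
    by (simp add: tri_discr_def X1_def X2_def Y1_def Y2_def)
  also have "\<dots> = (u * (X1^2 * Y2 + X2^2 * Y1)) / (u * Y1 * Y2)"
    using u Y by (simp add: field_simps)
  also have "\<dots> \<le> ((d^2 + 4 * e^2 * u^2) * Y1 * Y2) / (u * Y1 * Y2)"
    using key u Y by (intro divide_right_mono) auto
  also have "\<dots> = d^2 / u + 4 * e^2 * u"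
    using u Y by (simp add: field_simps power2_eq_square)
  also have "\<dots> = tri_discr x y + 4 * e^2 * (x + y)"
    by (simp add: tri_discr_def u_def d_def)
  finally show ?thesis .
qed

(* One round from masses x, y: arm 1 is pulled with probability p1 and has likelihoods
   1/2 -+ e in the two states, arm 2 has the same likelihood m in both. *)
lemma tri_discr_round_le:
  assumes x: "0 \<le> x" and y: "0 \<le> y" and e: "0 \<le> e" "e < 1/2"
    and p: "0 \<le> p1" "0 \<le> p2" "p1 + p2 = 1"
  shows "tri_discr (x * p1 * (1/2 - e)) (y * p1 * (1/2 + e)) +
         tri_discr (x * p1 * (1/2 + e)) (y * p1 * (1/2 - e)) +
         tri_discr (x * p2 * m) (y * p2 * m) + tri_discr (x * p2 * (1 - m)) (y * p2 * (1 - m))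
         \<le> tri_discr x y + 4 * e^2 * (x + y)"
proof -
  have "tri_discr (x * p1 * (1/2 - e)) (y * p1 * (1/2 + e)) +
        tri_discr (x * p1 * (1/2 + e)) (y * p1 * (1/2 - e))
      = p1 * (tri_discr (x * (1/2 - e)) (y * (1/2 + e)) + tri_discr (x * (1/2 + e)) (y * (1/2 - e)))"
    using tri_discr_scale[of "x * (1/2 - e)" p1 "y * (1/2 + e)"]
      tri_discr_scale[of "x * (1/2 + e)" p1 "y * (1/2 - e)"]
    by (simp add: algebra_simps)
  also have "\<dots> \<le> p1 * (tri_discr x y + 4 * e^2 * (x + y))"
    using tri_discr_observation_le[OF x y e] p by (intro mult_left_mono) auto
  also have "\<dots> \<le> p1 * tri_discr x y + 4 * e^2 * (x + y)"
  proof -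
    have "p1 \<le> 1" "0 \<le> 4 * e^2 * (x + y)" using p x y by simp_all
    then have "p1 * (4 * e^2 * (x + y)) \<le> 4 * e^2 * (x + y)"
      using p by (intro mult_left_le_one_le)
    then show ?thesis by (simp only: distrib_left)
  qed
  finally have arm1: "tri_discr (x * p1 * (1/2 - e)) (y * p1 * (1/2 + e)) +
      tri_discr (x * p1 * (1/2 + e)) (y * p1 * (1/2 - e))
      \<le> p1 * tri_discr x y + 4 * e^2 * (x + y)" .
  have arm2: "tri_discr (x * p2 * m) (y * p2 * m) + tri_discr (x * p2 * (1 - m)) (y * p2 * (1 - m)) =
      p2 * tri_discr x y"
    using tri_discr_scale[of x "p2 * m" y] tri_discr_scale[of x "p2 * (1 - m)" y]
    by (simp add: algebra_simps)
  have "p1 * tri_discr x y + p2 * tri_discr x y = tri_discr x y"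
    using p by (simp flip: distrib_right)
  with arm1 arm2 show ?thesis by linarith
qed

lemma tri_discr_posterior:
  assumes "(x + y) * q = x" "0 \<le> x" "0 \<le> y"
  shows "q * (x - y) = (tri_discr x y + (x - y)) / 2"
proof (cases "x + y = 0")
  case True
  with assms have "x = 0" "y = 0" by auto
  then show ?thesis by (simp add: tri_discr_def)
next
  case False
  with assms(1) have "q = x / (x + y)"
    by (simp add: eq_divide_eq mult.commute)
  then have "q * (x - y) = x * (x - y) / (x + y)"
    by simp
  also have "\<dots> = (tri_discr x y + (x - y)) / 2"
    using False by (simp add: tri_discr_def field_simps power2_eq_square)
  finally show ?thesis .
qed

section \<open>Histories and runs\<close>

definition hists :: "nat \<Rightarrow> hist set" where
  "hists n = {h. set h \<subseteq> {1,2} \<times> UNIV \<and> length h = n}"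

lemma finite_hists: "finite (hists n)"
  unfolding hists_def by (rule finite_lists_length_eq) auto

lemma hists_0 [simp]: "hists 0 = {[]}"
  by (auto simp: hists_def)

lemma hists_Suc:
  "hists (Suc n) = (\<lambda>(h, a, r). h @ [(a, r)]) ` (hists n \<times> {1,2} \<times> UNIV)"
proof (intro equalityI subsetI)
  fix h assume "h \<in> hists (Suc n)"
  then show "h \<in> (\<lambda>(h, a, r). h @ [(a, r)]) ` (hists n \<times> {1,2} \<times> UNIV)"
    by (cases h rule: rev_cases) (auto simp: hists_def image_iff)
qed (auto simp: hists_def)

lemma sum_hists_Suc:
  fixes f :: "hist \<Rightarrow> real"
  shows "(\<Sum>h\<in>hists (Suc n). f h) =
         (\<Sum>h\<in>hists n. \<Sum>a\<in>{1,2}. f (h @ [(a, True)]) + f (h @ [(a, False)]))"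
proof -
  have "inj_on (\<lambda>(h, a, r). h @ [(a, r)]) (hists n \<times> {1,2} \<times> UNIV)"
    by (auto simp: inj_on_def)
  then show ?thesis
    by (simp add: hists_Suc sum.reindex sum.cartesian_product' UNIV_bool add_ac)
qed

lemma mu_bounds:
  assumes "0 < eps" "eps < 1/2"
  shows "0 \<le> mu eps theta i" "mu eps theta i \<le> 1"
proof -
  have "eps^2 < 1" using assms by (simp add: power_less_one_iff abs_less_iff)
  then have "0 \<le> 1/2 - eps^2/10" "1/2 - eps^2/10 \<le> 1"
    using zero_le_power2[of eps] by linarith+
  then show "0 \<le> mu eps theta i" "mu eps theta i \<le> 1"
    using assms by (auto simp: mu_def)
qed

lemma best_arm:
  assumes "0 < eps" "eps < 1/2"
  shows "best_arm eps True = 1" "best_arm eps False = 2"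
proof -
  have "eps^2 / 10 < eps"
    using assms by (simp add: power2_eq_square)
  then have "1/2 - eps^2/10 \<le> 1/2 + eps" "1/2 - eps < 1/2 - eps^2/10"
    using zero_le_power2[of eps] by linarith+
  then have "mu eps True 2 \<le> mu eps True 1" "mu eps False 1 < mu eps False 2"
    by (simp_all add: mu_def)
  then show "best_arm eps True = 1" "best_arm eps False = 2"
    unfolding best_arm_def by (auto intro!: Least_equality)
qed

lemma set_pmf_run:
  assumes "valid_alg A"
  shows "set_pmf (run eps A n) \<subseteq> UNIV \<times> hists n"
proof (induction n)
  case (Suc n)
  have "h @ [(a, r)] \<in> hists (Suc n)" if "h \<in> hists n" "a \<in> set_pmf (A h)" for h a r
    using that assms by (auto simp: hists_def valid_alg_def)
  with Suc show ?case by fastforce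
qed (auto simp: hists_def)

lemma finite_set_pmf_run: "valid_alg A \<Longrightarrow> finite (set_pmf (run eps A n))"
  by (rule finite_subset[OF set_pmf_run]) (auto simp: finite_hists)

lemma finite_set_pmf_alg: "valid_alg A \<Longrightarrow> finite (set_pmf (A h))"
  by (rule finite_subset[of _ "{1,2}"]) (auto simp: valid_alg_def)

lemma pmf_alg_sum: "valid_alg A \<Longrightarrow> pmf (A h) 1 + pmf (A h) 2 = 1"
  using sum_pmf_eq_1[of "{1,2::nat}" "A h"] by (auto simp: valid_alg_def)

lemma expectation_alg:
  fixes f :: "nat \<Rightarrow> real"
  assumes "valid_alg A"
  shows "measure_pmf.expectation (A h) f = pmf (A h) 1 * f 1 + pmf (A h) 2 * f 2"
  using assms by (subst integral_measure_pmf_real[of "{1,2}"]) (auto simp: valid_alg_def)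

lemma pmf_run_0: "pmf (run eps A 0) (theta, []) = 1/2"
  using pmf_map_inj'[of "\<lambda>theta. (theta, [] :: hist)" prior theta]
  by (simp add: inj_def prior_def)

lemma pmf_run_Suc:
  "pmf (run eps A (Suc n)) (theta, h @ [(a, r)]) =
   pmf (run eps A n) (theta, h) * pmf (A h) a * pmf (bernoulli_pmf (mu eps theta a)) r"
proof -
  let ?step = "\<lambda>a. map_pmf (\<lambda>r. (theta, h @ [(a, r)])) (bernoulli_pmf (mu eps theta a))"
  have "pmf (run eps A (Suc n)) (theta, h @ [(a, r)]) =
        pmf (run eps A n) (theta, h) * pmf (bind_pmf (A h) ?step) (theta, h @ [(a, r)])"
    unfolding run.simps by (subst pmf_bind_single_source[where z = "(theta, h)"]) auto
  also have "pmf (bind_pmf (A h) ?step) (theta, h @ [(a, r)]) =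
             pmf (A h) a * pmf (?step a) (theta, h @ [(a, r)])"
    by (subst pmf_bind_single_source[where z = a]) auto
  also have "pmf (?step a) (theta, h @ [(a, r)]) = pmf (bernoulli_pmf (mu eps theta a)) r"
    by (rule pmf_map_inj') (auto simp: inj_def)
  finally show ?thesis by (simp add: mult.assoc)
qed

lemma map_fst_run: "map_pmf fst (run eps A n) = prior"
proof (induction n)
  case (Suc n)
  have "map_pmf fst (run eps A (Suc n)) = bind_pmf (run eps A n) (\<lambda>x. return_pmf (fst x))"
    by (auto simp: map_bind_pmf map_pmf_comp split_beta intro!: bind_pmf_cong)
  with Suc show ?case by (simp add: map_pmf_def)
qed (simp add: map_pmf_comp)

lemma expectation_run:
  fixes G :: "bool \<times> hist \<Rightarrow> real"
  assumes "valid_alg A"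
  shows "measure_pmf.expectation (run eps A n) G =
    (\<Sum>h\<in>hists n. G (True, h) * pmf (run eps A n) (True, h) +
                   G (False, h) * pmf (run eps A n) (False, h))"
proof -
  have "measure_pmf.expectation (run eps A n) G =
        (\<Sum>x\<in>UNIV \<times> hists n. G x * pmf (run eps A n) x)"
    by (rule integral_measure_pmf_real) (use set_pmf_run[OF assms] finite_hists in auto)
  then show ?thesis
    by (simp add: sum.cartesian_product' UNIV_bool sum.distrib)
qed

lemma expectation_run_state:
  fixes F :: "bool \<Rightarrow> real"
  shows "measure_pmf.expectation (run eps A n) (\<lambda>x. F (fst x)) = (F True + F False) / 2"
proof -
  have "measure_pmf.expectation (run eps A n) (\<lambda>x. F (fst x)) =
        measure_pmf.expectation (map_pmf fst (run eps A n)) F"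
    by simp
  then show ?thesis
    by (simp add: map_fst_run prior_def)
qed

lemma sum_pmf_run_state:
  assumes "valid_alg A"
  shows "(\<Sum>h\<in>hists n. pmf (run eps A n) (theta, h)) = 1/2"
  using expectation_run[OF assms, of eps n "\<lambda>x. if fst x = theta then 1 else 0"]
        expectation_run_state[of eps A n "\<lambda>x. if x = theta then 1 else 0"]
  by (cases theta) simp_all

lemma expectation_run_0:
  fixes G :: "bool \<times> hist \<Rightarrow> real"
  shows "measure_pmf.expectation (run eps A 0) G = (G (True, []) + G (False, [])) / 2"
  by (simp add: prior_def)

lemma expectation_run_Suc:
  fixes G :: "bool \<times> hist \<Rightarrow> real"
  assumes A: "valid_alg A" and eps: "0 < eps" "eps < 1/2"
  shows "measure_pmf.expectation (run eps A (Suc n)) G =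
    measure_pmf.expectation (run eps A n) (\<lambda>x.
      (\<Sum>a\<in>{1,2}. pmf (A (snd x)) a *
         (G (fst x, snd x @ [(a, True)]) * mu eps (fst x) a +
          G (fst x, snd x @ [(a, False)]) * (1 - mu eps (fst x) a))))"
  unfolding run.simps
  by (subst expectation_bind_pmf_finite)
     (auto simp: finite_set_pmf_run[OF A] finite_set_pmf_alg[OF A] expectation_bind_pmf_finite
        expectation_alg[OF A] mu_bounds[OF eps] split: prod.splits
        intro!: Bochner_Integration.integral_cong)

section \<open>Incentive compatibility\<close>

lemma finite_set_pmf_rec_dist: "valid_alg A \<Longrightarrow> finite (set_pmf (rec_dist eps A t))"
  unfolding rec_dist_def using finite_set_pmf_run finite_set_pmf_alg
  by (auto intro!: finite_UN_I split: prod.splits)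

lemma expectation_rec_dist_arm:
  fixes F :: "bool \<Rightarrow> real"
  assumes A: "valid_alg A"
  shows "measure_pmf.expectation (rec_dist eps A t)
           (\<lambda>x. indicator {x. snd (snd x) = i} x * F (fst x)) =
         measure_pmf.expectation (run eps A (t - 1)) (\<lambda>x. pmf (A (snd x)) i * F (fst x))"
proof -
  have "measure_pmf.expectation (A h) (\<lambda>a. indicator {i} a * c) = pmf (A h) i * c"
    for h and c :: real
    by (subst integral_measure_pmf_real[of "{i}"]) (auto simp: indicator_def)
  then show ?thesis
    unfolding rec_dist_def
    by (subst expectation_bind_pmf_finite)
       (auto simp: finite_set_pmf_run[OF A] finite_set_pmf_alg[OF A] indicator_def
          split: prod.splits intro!: Bochner_Integration.integral_cong)
qed

lemma prob_rec_dist_arm: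
  assumes "valid_alg A"
  shows "measure_pmf.prob (rec_dist eps A t) {x. snd (snd x) = i} =
         measure_pmf.expectation (run eps A (t - 1)) (\<lambda>x. pmf (A (snd x)) i)"
  using expectation_rec_dist_arm[OF assms, of eps t i "\<lambda>_. 1"] by simp

(* gain eps A (t - 1) i j = E[(mu_i - mu_j) 1{A_t = i}], the BIC quantity of round t
   before the division by Pr[A_t = i]. *)
definition gain :: "real \<Rightarrow> alg \<Rightarrow> nat \<Rightarrow> nat \<Rightarrow> nat \<Rightarrow> real" where
  "gain eps A n i j = measure_pmf.expectation (run eps A n)
     (\<lambda>x. pmf (A (snd x)) i * (mu eps (fst x) i - mu eps (fst x) j))"

lemma BIC_iff_gain:
  assumes A: "valid_alg A"
  shows "BIC eps A \<longleftrightarrow>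
    (\<forall>t\<ge>1. \<forall>i\<in>{1::nat,2}. \<forall>j\<in>{1::nat,2}.
       measure_pmf.prob (rec_dist eps A t) {x. snd (snd x) = i} > 0 \<longrightarrow>
       0 \<le> gain eps A (t - 1) i j)"
proof -
  have "measure_pmf.expectation (cond_pmf (rec_dist eps A t) {x. snd (snd x) = i})
          (\<lambda>x. mu eps (fst x) i - mu eps (fst x) j)
        = gain eps A (t - 1) i j / measure_pmf.prob (rec_dist eps A t) {x. snd (snd x) = i}"
    if "measure_pmf.prob (rec_dist eps A t) {x. snd (snd x) = i} > 0" for t i j
    using that expectation_rec_dist_arm[OF A, where F = "\<lambda>theta. mu eps theta i - mu eps theta j"]
    by (simp add: expectation_cond_pmf finite_set_pmf_rec_dist[OF A] gain_def)
  then show ?thesis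
    unfolding BIC_def by (auto simp: zero_le_divide_iff)
qed

section \<open>Exploring both arms in three rounds\<close>

fun explore_both :: alg where
  "explore_both [] = return_pmf 1"
| "explore_both [(a, r)] = (if r then pmf_of_set {1,2} else return_pmf 2)"
| "explore_both [(a1, r1), (a2, r2)] = (if a2 = 2 \<and> r1 then return_pmf 1 else return_pmf 2)"
| "explore_both (x # y # z # w) = return_pmf 1"

lemma valid_explore_both: "valid_alg explore_both"
  unfolding valid_alg_def
proof
  show "set_pmf (explore_both h) \<subseteq> {1,2}" for h
    by (induction h rule: explore_both.induct) auto
qed

lemma explore_both_covers:
  "\<forall>x\<in>set_pmf (run eps explore_both 3). {1,2} \<subseteq> fst ` set (snd x)"
  by (auto simp: numeral_3_eq_3)

lemma gain_explore_both_early: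
  assumes eps: "0 < eps" "eps < 1/2" and "n < 3"
  shows "0 \<le> gain eps explore_both n 1 2 \<and> 0 \<le> gain eps explore_both n 2 1"
proof -
  from \<open>n < 3\<close> consider "n = 0" | "n = Suc 0" | "n = Suc (Suc 0)" by linarith
  then show ?thesis
    by cases
       (simp_all add: gain_def expectation_run_0 expectation_run_Suc[OF valid_explore_both eps]
          mu_bounds[OF eps] del: run.simps,
        (use eps in \<open>simp_all add: mu_def field_simps power2_eq_square\<close>))
qed

lemma gain_explore_both_late:
  assumes "3 \<le> n"
  shows "gain eps explore_both n i j =
    (if i = 1 then (mu eps True 1 + mu eps False 1) / 2 - (mu eps True j + mu eps False j) / 2
     else 0)"
proof -
  define F where "F theta = (if i = 1 then mu eps theta 1 - mu eps theta j else 0)" for theta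
  have "pmf (explore_both h) i = (if i = 1 then 1 else 0)" if "h \<in> hists n" for h
    using that assms by (cases h rule: explore_both.cases) (auto simp: hists_def)
  then have "gain eps explore_both n i j =
             measure_pmf.expectation (run eps explore_both n) (\<lambda>x. F (fst x))"
    unfolding gain_def F_def using set_pmf_run[OF valid_explore_both, of eps n]
    by (intro integral_cong_AE) (auto simp: AE_measure_pmf_iff)
  also have "\<dots> = (F True + F False) / 2"
    by (rule expectation_run_state)
  finally show ?thesis
    unfolding F_def by (cases "i = 1") (simp_all add: field_simps)
qed

lemma gain_explore_both_nonneg:
  assumes eps: "0 < eps" "eps < 1/2" and ij: "i \<in> {1,2}" "j \<in> {1,2}"
  shows "0 \<le> gain eps explore_both n i j"
proof (cases "n < 3")
  case True
  with ij gain_explore_both_early[OF eps] show ?thesis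
    by (auto simp: gain_def)
next
  case False
  with ij eps show ?thesis
    by (auto simp: gain_explore_both_late mu_def)
qed

lemma BIC_explore_both:
  assumes "0 < eps" "eps < 1/2"
  shows "BIC eps explore_both"
  using gain_explore_both_nonneg[OF assms] by (simp add: BIC_iff_gain[OF valid_explore_both])

section \<open>Thompson sampling needs order 1/eps rounds\<close>

definition tri_divergence :: "real \<Rightarrow> alg \<Rightarrow> nat \<Rightarrow> real" where
  "tri_divergence eps A n =
     (\<Sum>h\<in>hists n. tri_discr (pmf (run eps A n) (False, h)) (pmf (run eps A n) (True, h)))"

lemma tri_divergence_le:
  assumes A: "valid_alg A" and eps: "0 < eps" "eps < 1/2"
  shows "tri_divergence eps A n \<le> 4 * eps^2 * n"
proof (induction n)
  case 0
  show ?case by (simp add: tri_divergence_def tri_discr_def pmf_run_0 del: run.simps)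
next
  case (Suc n)
  let ?R = "run eps A n" and ?R' = "run eps A (Suc n)"
  have step: "(\<Sum>a\<in>{1,2}.
        tri_discr (pmf ?R' (False, h @ [(a, True)])) (pmf ?R' (True, h @ [(a, True)])) +
        tri_discr (pmf ?R' (False, h @ [(a, False)])) (pmf ?R' (True, h @ [(a, False)])))
      \<le> tri_discr (pmf ?R (False, h)) (pmf ?R (True, h)) +
         4 * eps^2 * (pmf ?R (False, h) + pmf ?R (True, h))"
    for h
  proof -
    let ?x = "pmf ?R (False, h)" and ?y = "pmf ?R (True, h)"
    let ?p1 = "pmf (A h) 1" and ?p2 = "pmf (A h) 2" and ?m = "mu eps True 2"
    have "(\<Sum>a\<in>{1,2}.
        tri_discr (pmf ?R' (False, h @ [(a, True)])) (pmf ?R' (True, h @ [(a, True)])) +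
        tri_discr (pmf ?R' (False, h @ [(a, False)])) (pmf ?R' (True, h @ [(a, False)])))
      = tri_discr (?x * ?p1 * (1/2 - eps)) (?y * ?p1 * (1/2 + eps)) +
        tri_discr (?x * ?p1 * (1/2 + eps)) (?y * ?p1 * (1/2 - eps)) +
        tri_discr (?x * ?p2 * ?m) (?y * ?p2 * ?m) +
        tri_discr (?x * ?p2 * (1 - ?m)) (?y * ?p2 * (1 - ?m))"
      by (simp add: pmf_run_Suc mu_bounds[OF eps] del: run.simps, simp add: mu_def add_ac)
    also have "\<dots> \<le> tri_discr ?x ?y + 4 * eps^2 * (?x + ?y)"
      by (rule tri_discr_round_le) (use eps pmf_alg_sum[OF A, of h] in auto)
    finally show ?thesis .
  qed
  have "tri_divergence eps A (Suc n) \<le>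
      (\<Sum>h\<in>hists n. tri_discr (pmf ?R (False, h)) (pmf ?R (True, h))
                    + 4 * eps^2 * (pmf ?R (False, h) + pmf ?R (True, h)))"
    unfolding tri_divergence_def sum_hists_Suc by (rule sum_mono) (rule step)
  also have "\<dots> = tri_divergence eps A n + 4 * eps^2"
    by (simp add: tri_divergence_def sum.distrib sum_pmf_run_state[OF A] flip: sum_distrib_left)
  also have "\<dots> \<le> 4 * eps^2 * Suc n"
    using Suc by (simp add: algebra_simps)
  finally show ?case .
qed

lemma thompson_at_arm2:
  assumes eps: "0 < eps" "eps < 1/2" and T: "thompson_at eps A t"
  shows "(pmf (run eps A (t - 1)) (False, h) + pmf (run eps A (t - 1)) (True, h)) * pmf (A h) 2 =
         pmf (run eps A (t - 1)) (False, h)"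
proof (cases "pmf (run eps A (t - 1)) (False, h) + pmf (run eps A (t - 1)) (True, h) = 0")
  case True
  then show ?thesis by (simp add: add_nonneg_eq_0_iff)
next
  case False
  let ?R = "run eps A (t - 1)"
  from False obtain theta where "pmf ?R (theta, h) \<noteq> 0"
    by fastforce
  then have mem: "(theta, h) \<in> set_pmf ?R"
    by (simp add: set_pmf_iff)
  then have ne: "set_pmf ?R \<inter> {y. snd y = h} \<noteq> {}"
    by auto
  have "pmf (A h) 2 = measure_pmf.prob (cond_pmf ?R {y. snd y = h}) {y. best_arm eps (fst y) = 2}"
    using T mem unfolding thompson_at_def by force
  also have "\<dots> =
      measure_pmf.prob ?R {(False, h)} / measure_pmf.prob ?R {(True, h), (False, h)}"
  proof -
    have dom: "{y. snd y = h} = {(True, h), (False, h)}"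
      by auto
    have "{(True, h), (False, h)} \<inter> {y. best_arm eps (fst y) = 2} = {(False, h)}"
      using best_arm[OF eps] by auto
    then show ?thesis
      by (subst measure_cond_pmf[OF ne]) (simp only: dom)
  qed
  also have "\<dots> = pmf ?R (False, h) / (pmf ?R (False, h) + pmf ?R (True, h))"
    by (simp add: measure_pmf_single measure_measure_pmf_finite)
  finally show ?thesis
    using False by (simp add: field_simps)
qed

lemma gain_thompson:
  assumes A: "valid_alg A" and eps: "0 < eps" "eps < 1/2" and T: "thompson_at eps A t"
  shows "gain eps A (t - 1) 2 1 = eps / 2 * tri_divergence eps A (t - 1) - eps^2 / 20"
proof -
  define n where "n = t - 1"
  define x where "x h = pmf (run eps A n) (False, h)" for h
  define y where "y h = pmf (run eps A n) (True, h)" for h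
  have post: "(x h + y h) * pmf (A h) 2 = x h" for h
    using thompson_at_arm2[OF eps T] by (simp add: x_def y_def n_def)
  have summand: "pmf (A h) 2 * (mu eps True 2 - mu eps True 1) * y h +
      pmf (A h) 2 * (mu eps False 2 - mu eps False 1) * x h =
      eps * ((tri_discr (x h) (y h) + (x h - y h)) / 2) - eps^2 / 10 * x h" for h
  proof -
    have "pmf (A h) 2 * (mu eps True 2 - mu eps True 1) * y h +
        pmf (A h) 2 * (mu eps False 2 - mu eps False 1) * x h =
        eps * (pmf (A h) 2 * (x h - y h)) - eps^2 / 10 * ((x h + y h) * pmf (A h) 2)"
      by (simp add: mu_def algebra_simps)
    also have "pmf (A h) 2 * (x h - y h) = (tri_discr (x h) (y h) + (x h - y h)) / 2"
      by (rule tri_discr_posterior[OF post]) (simp_all add: x_def y_def)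
    also have "(x h + y h) * pmf (A h) 2 = x h"
      by (rule post)
    finally show ?thesis .
  qed
  have "gain eps A n 2 1 =
      (\<Sum>h\<in>hists n. eps * ((tri_discr (x h) (y h) + (x h - y h)) / 2) - eps^2 / 10 * x h)"
    unfolding gain_def expectation_run[OF A] fst_conv snd_conv
    by (intro sum.cong refl) (simp only: summand flip: x_def y_def)
  also have "\<dots> = eps / 2 * (\<Sum>h\<in>hists n. tri_discr (x h) (y h))
      + eps / 2 * ((\<Sum>h\<in>hists n. x h) - (\<Sum>h\<in>hists n. y h))
      - eps^2 / 10 * (\<Sum>h\<in>hists n. x h)"
    by (simp add: algebra_simps sum.distrib sum_subtractf sum_distrib_left sum_distrib_right
          sum_divide_distrib add_divide_distrib diff_divide_distrib)
  also have "\<dots> = eps / 2 * tri_divergence eps A n - eps^2 / 20"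
    by (simp add: tri_divergence_def x_def y_def sum_pmf_run_state[OF A])
  finally show ?thesis
    by (simp add: n_def)
qed

lemma prob_arm2_thompson:
  assumes A: "valid_alg A" and eps: "0 < eps" "eps < 1/2" and T: "thompson_at eps A t"
  shows "measure_pmf.prob (rec_dist eps A t) {x. snd (snd x) = 2} = 1/2"
proof -
  have "measure_pmf.prob (rec_dist eps A t) {x. snd (snd x) = 2} =
        (\<Sum>h\<in>hists (t - 1).
           (pmf (run eps A (t - 1)) (False, h) + pmf (run eps A (t - 1)) (True, h)) * pmf (A h) 2)"
    by (simp add: prob_rec_dist_arm[OF A] expectation_run[OF A] algebra_simps)
  also have "\<dots> = (\<Sum>h\<in>hists (t - 1). pmf (run eps A (t - 1)) (False, h))"
    by (simp only: thompson_at_arm2[OF eps T])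
  also have "\<dots> = 1/2"
    by (rule sum_pmf_run_state[OF A])
  finally show ?thesis .
qed

lemma thompson_at_lower_bound:
  assumes eps: "0 < eps" "eps < 1/2" and A: "valid_alg A" and "BIC eps A"
    and t: "1 \<le> t" and T: "thompson_at eps A t"
  shows "1 / (40 * eps) \<le> real t"
proof -
  have "0 \<le> gain eps A (t - 1) 2 1"
    using \<open>BIC eps A\<close>[unfolded BIC_iff_gain[OF A]] t prob_arm2_thompson[OF A eps T]
    by auto
  then have "eps^2 / 20 \<le> eps / 2 * tri_divergence eps A (t - 1)"
    unfolding gain_thompson[OF A eps T] by simp
  also have "\<dots> \<le> eps / 2 * (4 * eps^2 * real (t - 1))"
    using tri_divergence_le[OF A eps] eps by (intro mult_left_mono) auto
  finally have "eps^2 * 1 \<le> eps^2 * (40 * eps * real (t - 1))"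
    by (simp add: algebra_simps power2_eq_square)
  then have "1 \<le> 40 * eps * real (t - 1)"
    using eps t by (subst (asm) mult_le_cancel_left_pos) auto
  also have "\<dots> \<le> 40 * eps * real t"
    using eps by (intro mult_left_mono) auto
  finally show ?thesis
    using eps by (simp add: field_simps)
qed

theorem propositionD5:
  shows "(\<exists>T::nat. \<forall>eps::real. 0 < eps \<and> eps < 1/2 \<longrightarrow>
            (\<exists>A. valid_alg A \<and> BIC eps A \<and>
                 (\<forall>x\<in>set_pmf (run eps A T). {1,2} \<subseteq> fst ` set (snd x))))
       \<and> (\<exists>c::real. c > 0 \<and>
            (\<forall>eps::real. \<forall>A t. 0 < eps \<and> eps < 1/2 \<and> valid_alg A \<and> BIC eps A \<and>
               t \<ge> 1 \<and> thompson_at eps A t \<longrightarrow> real t \<ge> c / eps))"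
  using valid_explore_both BIC_explore_both explore_both_covers thompson_at_lower_bound
  by (intro conjI allI impI exI[of _ "3::nat"] exI[of _ explore_both] exI[of _ "1/40::real"]) auto

end
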